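(* Let $\mathcal T$ be a finite rooted tree of depth at most $L$, where $L\ge1$ is an integer. Let $\Delta\ge1$ and $s\ge0$. Let $W$ be a subset of the internal (non-leaf) vertices of $\mathcal T$ such that each internal vertex not in $W$ has at least $\Delta$ children, and each path from the root contains at most $s$ vertices of $W$. Then there is some $T\in\{0,\dots,L\}$ for which the number of leaves of $\mathcal T$ at depth $T$ is at least $L^{-1}\Delta^{T-s}$.
   Context: The depth of a vertex is its distance from the root. *)

theory Defs
  imports Complex_Main "HOL-Library.Sublist"
begin

text \<open>A vertex is identified with its
  position: the list of child indices on the path from the root (the root is the empty list).
  The depth of a vertex is the length of its position.\<close>

datatype rtree = Node "rtree list"

fun kids :: "rtree \<Rightarrow> rtree list" where
  "kids (Node ts) = ts"

fun subtree :: "rtree \<Rightarrow> nat list \<Rightarrow> rtree" where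
  "subtree t [] = t"
| "subtree (Node ts) (i # p) = (if i < length ts then subtree (ts ! i) p else Node [])"

inductive_set vertices :: "rtree \<Rightarrow> nat list set" for t where
  root: "[] \<in> vertices t"
| child: "p \<in> vertices t \<Longrightarrow> i < length (kids (subtree t p)) \<Longrightarrow> p @ [i] \<in> vertices t"

definition num_children :: "rtree \<Rightarrow> nat list \<Rightarrow> nat" where
  "num_children t p = length (kids (subtree t p))"

definition is_leaf :: "rtree \<Rightarrow> nat list \<Rightarrow> bool" where
  "is_leaf t p \<longleftrightarrow> p \<in> vertices t \<and> num_children t p = 0"

definition internal :: "rtree \<Rightarrow> nat list set" where
  "internal t = {p \<in> vertices t. num_children t p > 0}"

text \<open>Vertices on the path from the root to \<open>p\<close> are exactly the prefixes of \<open>p\<close>.\<close>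
definition leaves_at_depth :: "rtree \<Rightarrow> nat \<Rightarrow> nat" where
  "leaves_at_depth t d = card {p. is_leaf t p \<and> length p = d}"

end

theory Submission
  imports Defs
begin

text \<open>Give a leaf \<open>p\<close> the weight \<open>\<Delta>^(w(p) - |p|)\<close>, where \<open>w(p)\<close> counts the vertices of \<open>W\<close>
  on the path to \<open>p\<close>.  A Kraft-type induction over the tree shows that the leaf weights sum to at
  least \<open>1\<close>.  Since \<open>w(p) \<le> s\<close>, this gives \<open>\<Sum>\<^sub>T N\<^sub>T \<Delta>^(s - T) \<ge> 1\<close> for the numbers \<open>N\<^sub>T\<close> of
  leaves at depth \<open>T\<close>.  Either the root is a leaf, and \<open>T = 0\<close> works, or \<open>N\<^sub>0 = 0\<close> and one of
  the \<open>L\<close> remaining terms is at least \<open>1/L\<close>.\<close>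

lemma Cons_in_vertices_Node:
  "i # p \<in> vertices (Node ts) \<longleftrightarrow> i < length ts \<and> p \<in> vertices (ts ! i)"
proof
  have "p = [] \<or> (\<exists>i q. p = i # q \<and> i < length ts \<and> q \<in> vertices (ts ! i))"
    if "p \<in> vertices (Node ts)" for p
    using that
  proof (induction rule: vertices.induct)
    case (child p j)
    then show ?case
      by (auto intro: vertices.intros split: if_splits)
  qed simp
  then show "i # p \<in> vertices (Node ts) \<Longrightarrow> i < length ts \<and> p \<in> vertices (ts ! i)"
    by blast
next
  assume "i < length ts \<and> p \<in> vertices (ts ! i)"
  then have "i < length ts" and "p \<in> vertices (ts ! i)" by auto
  from this(2) show "i # p \<in> vertices (Node ts)"
  proof (induction rule: vertices.induct)
    case root
    show ?case
      using vertices.child[OF vertices.root, of i "Node ts"] \<open>i < length ts\<close> by simp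
  next
    case (child q j)
    then show ?case
      using vertices.child[of "i # q" "Node ts" j] \<open>i < length ts\<close> by simp
  qed
qed

lemma vertices_Node:
  "vertices (Node ts) = insert [] (\<Union>i<length ts. Cons i ` vertices (ts ! i))"
proof (rule set_eqI)
  fix p
  show "p \<in> vertices (Node ts) \<longleftrightarrow> p \<in> insert [] (\<Union>i<length ts. Cons i ` vertices (ts ! i))"
    by (cases p) (auto simp: Cons_in_vertices_Node intro: vertices.root)
qed

lemma finite_vertices: "finite (vertices t)"
  by (induction t) (simp add: vertices_Node)

lemma num_children_Cons [simp]:
  "i < length ts \<Longrightarrow> num_children (Node ts) (i # p) = num_children (ts ! i) p"
  by (simp add: num_children_def)

lemma is_leaf_Cons: "is_leaf (Node ts) (i # p) \<longleftrightarrow> i < length ts \<and> is_leaf (ts ! i) p"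
  by (auto simp: is_leaf_def Cons_in_vertices_Node)

lemma Cons_in_internal: "i # p \<in> internal (Node ts) \<longleftrightarrow> i < length ts \<and> p \<in> internal (ts ! i)"
  by (auto simp: internal_def Cons_in_vertices_Node)

lemma finite_leaves: "finite {p. is_leaf t p}"
  by (rule finite_subset[OF _ finite_vertices]) (auto simp: is_leaf_def)

lemma sum_leaves_Node:
  assumes "ts \<noteq> []"
  shows "(\<Sum>p | is_leaf (Node ts) p. f p) = (\<Sum>i<length ts. \<Sum>p | is_leaf (ts ! i) p. f (i # p))"
proof -
  have leaves: "{p. is_leaf (Node ts) p} = (\<Union>i<length ts. Cons i ` {p. is_leaf (ts ! i) p})"
  proof (rule set_eqI)
    fix p
    show "p \<in> {p. is_leaf (Node ts) p} \<longleftrightarrow> p \<in> (\<Union>i<length ts. Cons i ` {p. is_leaf (ts ! i) p})"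
      using assms by (cases p) (auto simp: is_leaf_Cons, auto simp: is_leaf_def num_children_def)
  qed
  have "(\<Sum>p | is_leaf (Node ts) p. f p) = (\<Sum>i<length ts. \<Sum>p \<in> Cons i ` {p. is_leaf (ts ! i) p}. f p)"
    unfolding leaves by (rule sum.UNION_disjoint) (auto simp: finite_leaves)
  also have "\<dots> = (\<Sum>i<length ts. \<Sum>p | is_leaf (ts ! i) p. f (i # p))"
    by (simp add: sum.reindex)
  finally show ?thesis .
qed

lemma card_prefixes_in_Cons:
  "card {q \<in> W. prefix q (i # p)} = of_bool ([] \<in> W) + card {q \<in> Cons i -` W. prefix q p}"
proof -
  have split: "{q \<in> W. prefix q (i # p)} = W \<inter> {[]} \<union> Cons i ` {q \<in> Cons i -` W. prefix q p}"
    by (auto simp: prefix_Cons)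
  have "finite {q \<in> Cons i -` W. prefix q p}"
    by (rule finite_subset[of _ "set (prefixes p)"]) auto
  moreover have "card (W \<inter> {[]}) = of_bool ([] \<in> W)"
    by auto
  ultimately show ?thesis
    unfolding split by (subst card_Un_disjoint) (auto simp: card_image)
qed

definition path_weight :: "real \<Rightarrow> nat list set \<Rightarrow> nat list \<Rightarrow> real" where
  "path_weight \<Delta> W p = \<Delta> powr (real (card {q \<in> W. prefix q p}) - real (length p))"

lemma path_weight_Cons:
  "path_weight \<Delta> W (i # p) = \<Delta> powr (of_bool ([] \<in> W) - 1) * path_weight \<Delta> (Cons i -` W) p"
  by (simp add: path_weight_def card_prefixes_in_Cons powr_add[symmetric] algebra_simps)

text \<open>Passing from a vertex to one of its \<open>n\<close> children multiplies the weight by \<open>1\<close> if the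
  vertex lies in \<open>W\<close> and by \<open>1/\<Delta>\<close> otherwise; in both cases the \<open>n\<close> children together carry at
  least the weight of their parent, since \<open>n \<ge> 1\<close>, resp. \<open>n \<ge> \<Delta>\<close>.\<close>
theorem sum_path_weight_leaves_ge_1:
  assumes "\<Delta> > 0" and "W \<subseteq> internal t"
    and "\<forall>p \<in> internal t - W. \<Delta> \<le> real (num_children t p)"
  shows "1 \<le> (\<Sum>p | is_leaf t p. path_weight \<Delta> W p)"
  using assms(2,3)
proof (induction t arbitrary: W)
  case (Node ts)
  show ?case
  proof (cases "ts = []")
    case True
    then have leaves: "{p. is_leaf (Node ts) p} = {[]}" and "[] \<notin> W"
      using Node.prems(1) by (auto simp: is_leaf_def internal_def num_children_def vertices_Node)
    then have no_W_on_path: "{q \<in> W. prefix q []} = {}"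
      by auto
    have "path_weight \<Delta> W [] = 1"
      using \<open>\<Delta> > 0\<close> unfolding path_weight_def no_W_on_path by simp
    then show ?thesis
      unfolding leaves by simp
  next
    case False
    define c where "c = \<Delta> powr (of_bool ([] \<in> W) - 1)"
    have children_ge_1: "1 \<le> (\<Sum>p | is_leaf (ts ! i) p. path_weight \<Delta> (Cons i -` W) p)"
      if "i < length ts" for i
    proof (rule Node.IH)
      show "ts ! i \<in> set ts"
        using that by simp
      show "Cons i -` W \<subseteq> internal (ts ! i)"
        using Node.prems(1) that by (auto simp: Cons_in_internal)
      show "\<forall>p \<in> internal (ts ! i) - Cons i -` W. \<Delta> \<le> real (num_children (ts ! i) p)"
        using Node.prems(2) that by (force simp: Cons_in_internal)
    qed
    have root_ge_1: "1 \<le> real (length ts) * c"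
    proof (cases "[] \<in> W")
      case True
      then show ?thesis
        using False \<open>\<Delta> > 0\<close> by (simp add: c_def Suc_le_eq)
    next
      case not_in_W: False
      have "[] \<in> internal (Node ts)"
        using False by (auto simp: internal_def num_children_def intro: vertices.root)
      then have "\<Delta> \<le> real (length ts)"
        using Node.prems(2) not_in_W by (force simp: num_children_def)
      then show ?thesis
        using not_in_W \<open>\<Delta> > 0\<close> by (simp add: c_def powr_minus field_simps)
    qed
    have "(\<Sum>p | is_leaf (Node ts) p. path_weight \<Delta> W p)
        = (\<Sum>i<length ts. c * (\<Sum>p | is_leaf (ts ! i) p. path_weight \<Delta> (Cons i -` W) p))"
      by (simp add: sum_leaves_Node[OF False] path_weight_Cons c_def sum_distrib_left)
    also have "\<dots> \<ge> (\<Sum>i<length ts. c * 1)"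
      by (intro sum_mono mult_left_mono children_ge_1) (auto simp: c_def)
    finally show ?thesis
      using root_ge_1 by simp
  qed
qed

lemma sum_leaves_by_depth:
  assumes "\<forall>p \<in> vertices t. length p \<le> L"
  shows "(\<Sum>p | is_leaf t p. f (length p)) = (\<Sum>T\<le>L. real (leaves_at_depth t T) * f T)"
proof -
  have "(\<Sum>p | is_leaf t p. f (length p))
      = (\<Sum>T\<le>L. \<Sum>p \<in> {p \<in> {p. is_leaf t p}. length p = T}. f (length p))"
    using assms by (intro sum.group[symmetric] finite_leaves finite_atMost) (auto simp: is_leaf_def)
  also have "\<dots> = (\<Sum>T\<le>L. real (leaves_at_depth t T) * f T)"
    by (simp add: leaves_at_depth_def)
  finally show ?thesis .
qed

lemma exists_ge_average:
  fixes f :: "'a \<Rightarrow> real"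
  assumes "finite A" and "A \<noteq> {}" and "c \<le> sum f A"
  shows "\<exists>x \<in> A. c / card A \<le> f x"
proof (rule ccontr)
  assume "\<not> ?thesis"
  then have "sum f A < (\<Sum>x \<in> A. c / card A)"
    using assms(1,2) by (intro sum_strict_mono) (auto simp: not_le)
  also have "\<dots> = c"
    using assms(1,2) by simp
  finally show False
    using assms(3) by simp
qed

theorem mainTheorem16:
  fixes t :: rtree and L :: nat and \<Delta> s :: real and W :: "nat list set"
  assumes "L \<ge> 1"
    and "\<forall>p\<in>vertices t. length p \<le> L"
    and "\<Delta> \<ge> 1" and "s \<ge> 0"
    and "W \<subseteq> internal t"
    and "\<forall>p\<in>internal t - W. real (num_children t p) \<ge> \<Delta>"
    and "\<forall>p\<in>vertices t. real (card {q \<in> W. prefix q p}) \<le> s"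
  shows "\<exists>T\<in>{0..L}. real (leaves_at_depth t T) \<ge> \<Delta> powr (real T - s) / real L"
proof -
  define N where "N T = real (leaves_at_depth t T)" for T
  have "1 \<le> (\<Sum>p | is_leaf t p. path_weight \<Delta> W p)"
    using assms(3,5,6) by (intro sum_path_weight_leaves_ge_1) auto
  also have "\<dots> \<le> (\<Sum>p | is_leaf t p. \<Delta> powr (s - real (length p)))"
    using assms(3,7) by (intro sum_mono) (auto simp: path_weight_def is_leaf_def intro: powr_mono)
  also have "\<dots> = (\<Sum>T\<le>L. N T * \<Delta> powr (s - real T))"
    unfolding N_def by (rule sum_leaves_by_depth[OF assms(2)])
  finally have weighted_count: "1 \<le> (\<Sum>T\<le>L. N T * \<Delta> powr (s - real T))" .
  show ?thesis
  proof (cases "N 0 = 0")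
    case True
    have "{..L} = insert 0 {1..L}"
      by auto
    with weighted_count True have "1 \<le> (\<Sum>T \<in> {1..L}. N T * \<Delta> powr (s - real T))"
      by simp
    then obtain T where T: "T \<in> {1..L}" and "1 / L \<le> N T * \<Delta> powr (s - real T)"
      using exists_ge_average[of "{1..L}" 1 "\<lambda>T. N T * \<Delta> powr (s - real T)"] assms(1) by auto
    then have "\<Delta> powr (real T - s) / L \<le> N T * (\<Delta> powr (s - real T) * \<Delta> powr (real T - s))"
      using assms(3) by (auto dest: mult_right_mono[of _ _ "\<Delta> powr (real T - s)"])
    also have "\<dots> = N T"
      using assms(3) by (simp add: powr_add[symmetric])
    finally show ?thesis
      using T by (auto simp: N_def)
  next
    case False
    have "\<Delta> powr (real 0 - s) / L \<le> 1"
      using assms(1,3,4) powr_mono[of "-s" 0 \<Delta>] by (simp add: divide_le_eq)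
    also have "1 \<le> N 0"
      using False by (simp add: N_def)
    finally show ?thesis
      unfolding N_def by (intro bexI[of _ 0]) auto
  qed
qed

end
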